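(* Let $p=(p_i)_{i\in\mathbb{N}}\in[0,1]^{\mathbb{N}}$ be a cookie environment, and let $\overline{p}_n=\frac1n\sum_{i=1}^n p_i$ and $A_n=\frac1n\sum_{i=1}^n p_i(1-p_i)$. Suppose $\lim_{n\to\infty}\overline{p}_n=\frac12$, that $A=\lim_{n\to\infty}A_n$ exists and $A>0$, and that there is $K$ with $|\overline{p}_n-\frac12|\le\frac Kn$ and $|A_n-A|\le\frac Kn$ for all $n\in\mathbb{N}$. Then $\lim_{x\to\infty}\frac1x\mathbb{E}[(U_p(x)-x)^2]$ exists and equals $8A$. Moreover, for all sufficiently large $x$, \[ \frac1x\mathbb{E}[(U_p(x)-x)^2]=8A+O\Big(\frac{\log^4 x}{\sqrt x}\Big), \] where the implicit constant depends only on $p$.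
   Context: For a cookie environment $p$, let $B_1,B_2,\dots$ be independent Bernoulli random variables with $\Pr[B_i=1]=p_i$ ($B_i=1$ is a "success", $B_i=0$ a "failure"). For a positive integer $x$, $U_p(x)=\inf\{k\in\mathbb{N}:\sum_{i=1}^k(1-B_i)=x\}-x$, i.e. the number of successes before the $x$-th failure. *)

theory Defs
  imports "HOL-Probability.Probability"
begin

text \<open>Cookie environment p: p i is the success probability of the i-th Bernoulli
  variable, i = 1, 2, ... (the value p 0 is irrelevant).  The sample space is
  nat => bool with the product of Bernoulli laws; omega i = True means B_i = 1 (success).\<close>

definition cookie_space :: "(nat \<Rightarrow> real) \<Rightarrow> (nat \<Rightarrow> bool) measure" where
  "cookie_space p = (\<Pi>\<^sub>M i\<in>UNIV. measure_pmf (bernoulli_pmf (p i)))"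

definition U :: "nat \<Rightarrow> (nat \<Rightarrow> bool) \<Rightarrow> nat" where
  "U x \<omega> = (LEAST k. card {i \<in> {1..k}. \<not> \<omega> i} = x) - x"

definition pbar :: "(nat \<Rightarrow> real) \<Rightarrow> nat \<Rightarrow> real" where
  "pbar p n = (1 / real n) * (\<Sum>i=1..n. p i)"

definition Avg :: "(nat \<Rightarrow> real) \<Rightarrow> nat \<Rightarrow> real" where
  "Avg p n = (1 / real n) * (\<Sum>i=1..n. p i * (1 - p i))"

end

theory Submission
  imports Defs
begin

text \<open>Let T be the time of the x-th failure, so that U(x) = T - x. The stopped sum
  D n = \<Sum>{i \<le> min n T} (1[B_i = 0] - (1 - p_i)) is a martingale whose increments are independent
  of the past and have variance p_i (1 - p_i). The rate hypothesis says that at time T the compensator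
  and the quadratic variation are T/2 + e(T) and A T + g(T) with |e|, |g| \<le> K. A second-moment bound
  for min n T shows that T is a.s. finite and square integrable, so optional stopping gives
  E[x - T/2 - e(T)] = 0 and E[(x - T/2 - e(T))^2] = E[A T + g(T)]. Hence E[(T/2 - x)^2] = 2 A x + O(sqrt x),
  the sqrt x coming only from the cross term between the martingale and e(T). Dividing by x/4 gives 8 A
  with error O(1/sqrt x), which is stronger than the claimed (log x)^4/sqrt x.\<close>

lemma square_sum_le: "((a::real) + b)\<^sup>2 \<le> 2 * a\<^sup>2 + 2 * b\<^sup>2"
  using zero_le_power2[of "a - b"] by (simp add: power2_eq_square algebra_simps)

lemma abs_mult_le_weighted_squares:
  fixes a b s :: real
  assumes "0 < s"
  shows "\<bar>a * b\<bar> \<le> a\<^sup>2 / (2 * s) + s * b\<^sup>2 / 2"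
proof -
  have "2 * s * \<bar>a * b\<bar> \<le> a\<^sup>2 + s\<^sup>2 * b\<^sup>2"
    using zero_le_power2[of "\<bar>a\<bar> - s * \<bar>b\<bar>"] assms
    by (simp add: abs_mult power2_eq_square algebra_simps)
  then show ?thesis
    using assms by (simp add: field_simps power2_eq_square)
qed

lemma abs_sum_centred_le:
  fixes f :: "nat \<Rightarrow> real"
  assumes rate: "\<And>n. n \<ge> 1 \<Longrightarrow> \<bar>(1 / real n) * (\<Sum>i=1..n. f i) - a\<bar> \<le> K / real n"
  shows "\<bar>\<Sum>i=1..c. (f i - a)\<bar> \<le> K"
proof (cases "c = 0")
  case True
  then show ?thesis
    using rate[of 1] by simp
next
  case False
  have "(\<Sum>i=1..c. (f i - a)) = real c * ((1 / real c) * (\<Sum>i=1..c. f i) - a)"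
    using False by (simp add: sum_subtractf field_simps)
  then have "\<bar>\<Sum>i=1..c. (f i - a)\<bar> = real c * \<bar>(1 / real c) * (\<Sum>i=1..c. f i) - a\<bar>"
    by (simp add: abs_mult)
  also have "\<dots> \<le> real c * (K / real c)"
    using rate[of c] False by (intro mult_left_mono) auto
  finally show ?thesis
    using False by simp
qed

lemma tendsto_and_log_rate_of_sqrt_rate:
  fixes f :: "nat \<Rightarrow> real"
  assumes rate: "\<And>x. 1 \<le> x \<Longrightarrow> \<bar>f x - L\<bar> \<le> C / sqrt (real x)"
  shows "f \<longlonglongrightarrow> L \<and> (\<exists>C. \<exists>x0\<ge>1. \<forall>x\<ge>x0. \<bar>f x - L\<bar> \<le> C * ln (real x) ^ 4 / sqrt (real x))"
proof
  have C: "0 \<le> C"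
    using rate[of 1] by simp
  have "(\<lambda>x. C / sqrt (real x)) \<longlonglongrightarrow> 0"
    by real_asymp
  then have "(\<lambda>x. f x - L) \<longlonglongrightarrow> 0"
    by (rule Lim_null_comparison[rotated]) (use rate in \<open>auto simp: eventually_sequentially\<close>)
  then show "f \<longlonglongrightarrow> L"
    by (rule LIM_zero_cancel)
  have "\<bar>f x - L\<bar> \<le> C * ln (real x) ^ 4 / sqrt (real x)" if "3 \<le> x" for x
  proof -
    have "exp 1 \<le> real x"
      using exp_le that by linarith
    then have "1 \<le> ln (real x) ^ 4"
      using that by (simp add: ln_ge_iff one_le_power)
    then have "C / sqrt (real x) \<le> C * ln (real x) ^ 4 / sqrt (real x)"
      using C by (intro divide_right_mono) (simp_all add: mult_le_cancel_left1)
    then show ?thesis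
      using rate[of x] that by simp
  qed
  then show "\<exists>C. \<exists>x0\<ge>1. \<forall>x\<ge>x0. \<bar>f x - L\<bar> \<le> C * ln (real x) ^ 4 / sqrt (real x)"
    by (intro exI[of _ C] exI[of _ "3::nat"]) auto
qed

lemma integral_tendsto_eventually_eq:
  fixes f :: "nat \<Rightarrow> 'a \<Rightarrow> real"
  assumes "\<And>n. f n \<in> borel_measurable M" "g \<in> borel_measurable M" "integrable M w"
    and eventually_eq: "AE \<omega> in M. eventually (\<lambda>n. f n \<omega> = g \<omega>) sequentially"
    and dominated: "\<And>n. AE \<omega> in M. \<bar>f n \<omega>\<bar> \<le> w \<omega>"
  shows "(\<lambda>n. \<integral>\<omega>. f n \<omega> \<partial>M) \<longlonglongrightarrow> (\<integral>\<omega>. g \<omega> \<partial>M)"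
proof (rule integral_dominated_convergence[OF assms(2,1,3)])
  show "AE \<omega> in M. (\<lambda>n. f n \<omega>) \<longlonglongrightarrow> g \<omega>"
    using eventually_eq by eventually_elim (rule tendsto_eventually)
qed (use dominated in simp)

lemma (in finite_measure) integrable_square_add_bounded:
  fixes f h :: "'a \<Rightarrow> real"
  assumes [measurable]: "f \<in> borel_measurable M" "h \<in> borel_measurable M"
    and "integrable M (\<lambda>\<omega>. (f \<omega>)\<^sup>2)" and h_le: "\<And>\<omega>. \<bar>h \<omega>\<bar> \<le> B"
  shows "integrable M (\<lambda>\<omega>. (f \<omega> + h \<omega>)\<^sup>2)"
proof (rule Bochner_Integration.integrable_bound)
  show "integrable M (\<lambda>\<omega>. 2 * (f \<omega>)\<^sup>2 + 2 * B\<^sup>2)"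
    using assms(3) by auto
  show "AE \<omega> in M. norm ((f \<omega> + h \<omega>)\<^sup>2) \<le> norm (2 * (f \<omega>)\<^sup>2 + 2 * B\<^sup>2)"
  proof (rule AE_I2)
    fix \<omega>
    have "(h \<omega>)\<^sup>2 \<le> B\<^sup>2"
      using power_mono[OF h_le abs_ge_zero, of \<omega> 2] by (simp add: power2_abs)
    then show "norm ((f \<omega> + h \<omega>)\<^sup>2) \<le> norm (2 * (f \<omega>)\<^sup>2 + 2 * B\<^sup>2)"
      using square_sum_le[of "f \<omega>" "h \<omega>"] by simp
  qed
qed measurable

lemma (in prob_space) abs_integral_le_const:
  fixes f :: "'a \<Rightarrow> real"
  assumes "integrable M f" "\<And>\<omega>. \<bar>f \<omega>\<bar> \<le> K"
  shows "\<bar>\<integral>\<omega>. f \<omega> \<partial>M\<bar> \<le> K"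
proof -
  have "\<bar>\<integral>\<omega>. f \<omega> \<partial>M\<bar> \<le> (\<integral>\<omega>. \<bar>f \<omega>\<bar> \<partial>M)"
    by (rule integral_abs_bound)
  also have "\<dots> \<le> (\<integral>\<omega>. K \<partial>M)"
    using assms by (intro integral_mono) auto
  finally show ?thesis
    by (simp add: prob_space)
qed

lemma (in prob_space) abs_integral_mult_bounded_le:
  fixes D e :: "'a \<Rightarrow> real"
  assumes [measurable]: "D \<in> borel_measurable M" "e \<in> borel_measurable M"
    and D_sq: "integrable M (\<lambda>\<omega>. (D \<omega>)\<^sup>2)" and e_le: "\<And>\<omega>. \<bar>e \<omega>\<bar> \<le> K" and "0 < s"
  shows "integrable M (\<lambda>\<omega>. D \<omega> * e \<omega>)"
    and "2 * \<bar>\<integral>\<omega>. D \<omega> * e \<omega> \<partial>M\<bar> \<le> (\<integral>\<omega>. (D \<omega>)\<^sup>2 \<partial>M) / s + K\<^sup>2 * s"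
proof -
  define w where "w \<omega> = (D \<omega>)\<^sup>2 / (2 * s) + s * K\<^sup>2 / 2" for \<omega>
  have w_int: "integrable M w"
    unfolding w_def using D_sq by auto
  have De_le: "\<bar>D \<omega> * e \<omega>\<bar> \<le> w \<omega>" for \<omega>
  proof -
    have "(e \<omega>)\<^sup>2 \<le> K\<^sup>2"
      using power_mono[OF e_le abs_ge_zero, of \<omega> 2] by (simp add: power2_abs)
    then have "s * (e \<omega>)\<^sup>2 / 2 \<le> s * K\<^sup>2 / 2"
      using \<open>0 < s\<close> by (simp add: mult_left_mono)
    then show ?thesis
      using abs_mult_le_weighted_squares[OF \<open>0 < s\<close>, of "D \<omega>" "e \<omega>"] by (simp add: w_def)
  qed
  show De_int: "integrable M (\<lambda>\<omega>. D \<omega> * e \<omega>)"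
    using De_le order_trans[OF abs_ge_zero De_le]
    by (intro Bochner_Integration.integrable_bound[OF w_int]) auto
  have "\<bar>\<integral>\<omega>. D \<omega> * e \<omega> \<partial>M\<bar> \<le> (\<integral>\<omega>. \<bar>D \<omega> * e \<omega>\<bar> \<partial>M)"
    by (rule integral_abs_bound)
  also have "\<dots> \<le> (\<integral>\<omega>. w \<omega> \<partial>M)"
    using De_int w_int De_le by (intro integral_mono) auto
  also have "\<dots> = (\<integral>\<omega>. (D \<omega>)\<^sup>2 \<partial>M) / (2 * s) + s * K\<^sup>2 / 2"
    using D_sq by (simp add: w_def prob_space)
  finally show "2 * \<bar>\<integral>\<omega>. D \<omega> * e \<omega> \<partial>M\<bar> \<le> (\<integral>\<omega>. (D \<omega>)\<^sup>2 \<partial>M) / s + K\<^sup>2 * s"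
    by (simp add: field_simps)
qed

lemma (in prob_space) wald_second_moment_near_linear:
  fixes T e g :: "'a \<Rightarrow> real" and x A K :: real
  assumes "integrable M T" "integrable M e" "integrable M g"
    and e_le: "\<And>\<omega>. \<bar>e \<omega>\<bar> \<le> K" and g_le: "\<And>\<omega>. \<bar>g \<omega>\<bar> \<le> K" and "0 \<le> A"
    and wald1: "(\<integral>\<omega>. x - T \<omega> / 2 - e \<omega> \<partial>M) = 0"
    and wald2: "(\<integral>\<omega>. (x - T \<omega> / 2 - e \<omega>)\<^sup>2 \<partial>M) = (\<integral>\<omega>. A * T \<omega> + g \<omega> \<partial>M)"
  shows "\<bar>(\<integral>\<omega>. (x - T \<omega> / 2 - e \<omega>)\<^sup>2 \<partial>M) - 2 * A * x\<bar> \<le> 2 * A * K + K"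
proof -
  have ET: "(\<integral>\<omega>. T \<omega> \<partial>M) = 2 * x - 2 * (\<integral>\<omega>. e \<omega> \<partial>M)"
    using wald1 assms(1,2) by (simp add: prob_space)
  have "(\<integral>\<omega>. (x - T \<omega> / 2 - e \<omega>)\<^sup>2 \<partial>M) - 2 * A * x
      = - 2 * A * (\<integral>\<omega>. e \<omega> \<partial>M) + (\<integral>\<omega>. g \<omega> \<partial>M)"
    unfolding wald2 using assms(1,3) by (simp add: ET algebra_simps)
  moreover have "\<bar>2 * A * (\<integral>\<omega>. e \<omega> \<partial>M)\<bar> \<le> 2 * A * K"
    using abs_integral_le_const[OF assms(2) e_le] \<open>0 \<le> A\<close> by (simp add: abs_mult mult_left_mono)
  ultimately show ?thesis
    using abs_integral_le_const[OF assms(3) g_le] by simp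
qed

lemma (in prob_space) second_moment_from_wald:
  fixes T e g :: "'a \<Rightarrow> real" and x A K :: real
  assumes [measurable]: "T \<in> borel_measurable M" "e \<in> borel_measurable M" "g \<in> borel_measurable M"
    and T_sq: "integrable M (\<lambda>\<omega>. (T \<omega>)\<^sup>2)"
    and e_le: "\<And>\<omega>. \<bar>e \<omega>\<bar> \<le> K" and g_le: "\<And>\<omega>. \<bar>g \<omega>\<bar> \<le> K"
    and "0 \<le> A" "1 \<le> x"
    and wald1: "(\<integral>\<omega>. x - T \<omega> / 2 - e \<omega> \<partial>M) = 0"
    and wald2: "(\<integral>\<omega>. (x - T \<omega> / 2 - e \<omega>)\<^sup>2 \<partial>M) = (\<integral>\<omega>. A * T \<omega> + g \<omega> \<partial>M)"
  shows "\<bar>(\<integral>\<omega>. (T \<omega> / 2 - x)\<^sup>2 \<partial>M) - 2 * A * x\<bar> \<le> (4 * A * K + 2 * K + 2 * A + 2 * K\<^sup>2) * sqrt x"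
proof -
  define D where "D \<omega> = x - T \<omega> / 2 - e \<omega>" for \<omega>
  define V where "V = (\<integral>\<omega>. (D \<omega>)\<^sup>2 \<partial>M)"
  define s where "s = sqrt x"
  define c where "c = 2 * A * K + K"
  have s: "1 \<le> s" "s * s = x"
    using \<open>1 \<le> x\<close> by (auto simp: s_def)
  have K: "0 \<le> K"
    using e_le[of undefined] by simp
  have c: "c \<le> c * s" "K\<^sup>2 \<le> K\<^sup>2 * s"
    using K \<open>0 \<le> A\<close> mult_left_mono[OF s(1), of c] mult_left_mono[OF s(1), of "K\<^sup>2"]
    by (simp_all add: c_def)
  have D_meas [measurable]: "D \<in> borel_measurable M"
    unfolding D_def by measurable
  have e_sq: "(e \<omega>)\<^sup>2 \<le> K\<^sup>2" for \<omega>
    using power_mono[OF e_le abs_ge_zero, of \<omega> 2] by (simp add: power2_abs)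
  then have e_sq_int: "integrable M (\<lambda>\<omega>. (e \<omega>)\<^sup>2)" and e_sq_le: "(\<integral>\<omega>. (e \<omega>)\<^sup>2 \<partial>M) \<le> K\<^sup>2"
    by (auto intro!: integrable_const_bound[where B="K\<^sup>2"] integral_le_const)
  have "\<bar>x - e \<omega>\<bar> \<le> x + K" for \<omega>
    using e_le[of \<omega>] \<open>1 \<le> x\<close> by linarith
  then have "integrable M (\<lambda>\<omega>. (- T \<omega> / 2 + (x - e \<omega>))\<^sup>2)"
    using T_sq by (intro integrable_square_add_bounded) (auto simp: power_divide)
  then have D_sq_int: "integrable M (\<lambda>\<omega>. (D \<omega>)\<^sup>2)"
    by (simp add: D_def algebra_simps)
  have V_close: "\<bar>V - 2 * A * x\<bar> \<le> c"
    unfolding V_def D_def c_def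
    using e_le g_le \<open>0 \<le> A\<close> wald1 wald2
    by (intro wald_second_moment_near_linear square_integrable_imp_integrable[OF _ T_sq])
      (auto intro!: integrable_const_bound[where B=K])
  have "0 < s"
    using s(1) by simp
  from abs_integral_mult_bounded_le[OF D_meas assms(2) D_sq_int e_le this]
  have cross: "integrable M (\<lambda>\<omega>. D \<omega> * e \<omega>)" "2 * \<bar>\<integral>\<omega>. D \<omega> * e \<omega> \<partial>M\<bar> \<le> V / s + K\<^sup>2 * s"
    by (simp_all add: V_def)
  have "(\<lambda>\<omega>. (T \<omega> / 2 - x)\<^sup>2) = (\<lambda>\<omega>. (D \<omega>)\<^sup>2 + 2 * (D \<omega> * e \<omega>) + (e \<omega>)\<^sup>2)"
    by (auto simp: D_def power2_eq_square algebra_simps)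
  then have EY: "(\<integral>\<omega>. (T \<omega> / 2 - x)\<^sup>2 \<partial>M) = V + 2 * (\<integral>\<omega>. D \<omega> * e \<omega> \<partial>M) + (\<integral>\<omega>. (e \<omega>)\<^sup>2 \<partial>M)"
    using D_sq_int cross(1) e_sq_int by (simp add: V_def)
  have "V \<le> 2 * A * (s * s) + c"
    using V_close by (simp add: s(2) abs_le_iff)
  also have "\<dots> \<le> (2 * (A * s) + c) * s"
    using c by (simp add: algebra_simps)
  finally have "V / s \<le> 2 * (A * s) + c"
    using s(1) by (simp add: pos_divide_le_eq)
  with cross(2) have "\<bar>2 * (\<integral>\<omega>. D \<omega> * e \<omega> \<partial>M)\<bar> \<le> 2 * (A * s) + c + K\<^sup>2 * s"
    by linarith
  moreover have "0 \<le> (\<integral>\<omega>. (e \<omega>)\<^sup>2 \<partial>M)"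
    by simp
  ultimately have "\<bar>(\<integral>\<omega>. (T \<omega> / 2 - x)\<^sup>2 \<partial>M) - 2 * A * x\<bar> \<le> 2 * (c * s) + 2 * (A * s) + 2 * (K\<^sup>2 * s)"
    using V_close e_sq_le c unfolding EY by linarith
  then show ?thesis
    by (simp add: s_def c_def algebra_simps)
qed

definition failures :: "nat \<Rightarrow> (nat \<Rightarrow> bool) \<Rightarrow> nat" where
  "failures k \<omega> = card {i \<in> {1..k}. \<not> \<omega> i}"

definition failure_time :: "nat \<Rightarrow> (nat \<Rightarrow> bool) \<Rightarrow> nat" where
  "failure_time x \<omega> = (LEAST k. failures k \<omega> = x)"

text \<open>With T = failure_time x, step i is running iff i \<le> T, and stopped_time x n = min n T. Unlike T,
  which is a junk value when the x-th failure never occurs, stopped_time x n is then simply n.\<close>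

definition running :: "nat \<Rightarrow> nat \<Rightarrow> (nat \<Rightarrow> bool) \<Rightarrow> bool" where
  "running x i \<omega> \<longleftrightarrow> failures (i - 1) \<omega> < x"

definition stopped_time :: "nat \<Rightarrow> nat \<Rightarrow> (nat \<Rightarrow> bool) \<Rightarrow> nat" where
  "stopped_time x n \<omega> = (LEAST k. k = n \<or> x \<le> failures k \<omega>)"

definition stopped_sum :: "nat \<Rightarrow> (nat \<Rightarrow> bool \<Rightarrow> real) \<Rightarrow> nat \<Rightarrow> (nat \<Rightarrow> bool) \<Rightarrow> real" where
  "stopped_sum x h n \<omega> = (\<Sum>i=1..n. if running x i \<omega> then h i (\<omega> i) else 0)"

lemma U_eq_failure_time: "U x \<omega> = failure_time x \<omega> - x"
  by (simp add: U_def failure_time_def failures_def)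

lemma failures_0 [simp]: "failures 0 \<omega> = 0"
  by (simp add: failures_def)

lemma failures_Suc: "failures (Suc k) \<omega> = failures k \<omega> + of_bool (\<not> \<omega> (Suc k))"
proof -
  have "{i \<in> {1..Suc k}. \<not> \<omega> i} = {i \<in> {1..k}. \<not> \<omega> i} \<union> (if \<omega> (Suc k) then {} else {Suc k})"
    by (auto simp: le_Suc_eq)
  then show ?thesis by (auto simp: failures_def)
qed

lemma failures_eq_sum: "real (failures k \<omega>) = (\<Sum>i=1..k. of_bool (\<not> \<omega> i))"
  by (induction k) (simp_all add: failures_Suc)

lemma failures_mono: "k \<le> l \<Longrightarrow> failures k \<omega> \<le> failures l \<omega>"
  unfolding failures_def by (rule card_mono) auto

lemma failures_le: "failures k \<omega> \<le> k"
proof -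
  have "failures k \<omega> \<le> card {1..k}"
    unfolding failures_def by (rule card_mono) auto
  then show ?thesis by simp
qed

lemma failures_prefix: "(\<And>j. j \<le> k \<Longrightarrow> \<omega> j = \<omega>' j) \<Longrightarrow> failures k \<omega> = failures k \<omega>'"
  unfolding failures_def by (intro arg_cong[where f=card]) auto

lemma failures_attained: "x \<le> failures k \<omega> \<Longrightarrow> \<exists>k'\<le>k. failures k' \<omega> = x"
proof (induction k)
  case (Suc k)
  show ?case
  proof (cases "x \<le> failures k \<omega>")
    case True
    then show ?thesis using Suc.IH le_Suc_eq by blast
  next
    case False
    then have "failures (Suc k) \<omega> = x"
      using Suc.prems by (auto simp: failures_Suc)
    then show ?thesis by blast
  qed
qed simp

lemma running_prefix: "(\<And>j. j < i \<Longrightarrow> \<omega> j = \<omega>' j) \<Longrightarrow> running x i \<omega> = running x i \<omega>'"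
  unfolding running_def using failures_prefix[of "i - 1" \<omega> \<omega>'] by (cases i) auto

lemma stopped_time_le: "stopped_time x n \<omega> \<le> n"
  unfolding stopped_time_def by (rule Least_le) simp

lemma running_iff_le_stopped_time:
  assumes "1 \<le> i" "i \<le> n"
  shows "running x i \<omega> \<longleftrightarrow> i \<le> stopped_time x n \<omega>"
proof
  assume "running x i \<omega>"
  show "i \<le> stopped_time x n \<omega>"
  proof (rule ccontr)
    assume "\<not> i \<le> stopped_time x n \<omega>"
    then have lt: "stopped_time x n \<omega> < n" "stopped_time x n \<omega> \<le> i - 1"
      using assms by auto
    have "stopped_time x n \<omega> = n \<or> x \<le> failures (stopped_time x n \<omega>) \<omega>"
      unfolding stopped_time_def by (rule LeastI[of _ n]) simp
    then have "x \<le> failures (i - 1) \<omega>"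
      using lt failures_mono[OF lt(2), of \<omega>] by auto
    with \<open>running x i \<omega>\<close> show False by (simp add: running_def)
  qed
next
  assume "i \<le> stopped_time x n \<omega>"
  then have "\<not> (i - 1 = n \<or> x \<le> failures (i - 1) \<omega>)"
    using assms not_less_Least[of "i - 1" "\<lambda>k. k = n \<or> x \<le> failures k \<omega>"]
    by (simp add: stopped_time_def)
  then show "running x i \<omega>" by (simp add: running_def)
qed

lemma stopped_sum_eq_sum: "stopped_sum x h n \<omega> = (\<Sum>i=1..stopped_time x n \<omega>. h i (\<omega> i))"
proof -
  have "stopped_sum x h n \<omega> = (\<Sum>i\<in>{1..n} \<inter> {i. i \<le> stopped_time x n \<omega>}. h i (\<omega> i))"
    unfolding stopped_sum_def sum.inter_restrict[OF finite_atLeastAtMost]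
    using running_iff_le_stopped_time[of _ n x \<omega>] by (intro sum.cong) auto
  also have "{1..n} \<inter> {i. i \<le> stopped_time x n \<omega>} = {1..stopped_time x n \<omega>}"
    using stopped_time_le[of x n \<omega>] by auto
  finally show ?thesis .
qed

lemma failures_stopped_time: "failures (stopped_time x n \<omega>) \<omega> = min (failures n \<omega>) x"
proof -
  define c where "c = stopped_time x n \<omega>"
  have c_le: "c \<le> n" unfolding c_def by (rule stopped_time_le)
  have c_stop: "c = n \<or> x \<le> failures c \<omega>"
    unfolding c_def stopped_time_def by (rule LeastI[of _ n]) simp
  have "failures c \<omega> \<le> x"
  proof (cases c)
    case (Suc k)
    then have "running x c \<omega>"
      using running_iff_le_stopped_time[of c n x \<omega>] c_le by (simp add: c_def)
    then show ?thesis using Suc by (simp add: running_def failures_Suc)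
  qed simp
  then show ?thesis
    using c_stop failures_mono[OF c_le, of \<omega>] by (auto simp: c_def)
qed

lemma stopped_time_mono: "n \<le> m \<Longrightarrow> stopped_time x n \<omega> \<le> stopped_time x m \<omega>"
  using running_iff_le_stopped_time[of "stopped_time x n \<omega>" n x \<omega>]
    running_iff_le_stopped_time[of "stopped_time x n \<omega>" m x \<omega>] stopped_time_le[of x n \<omega>]
  by (cases "stopped_time x n \<omega>") auto

lemma stopped_time_unreached: "\<nexists>k. failures k \<omega> = x \<Longrightarrow> stopped_time x n \<omega> = n"
  using failures_attained[of x _ \<omega>] unfolding stopped_time_def
  by (intro Least_equality) auto

lemma
  assumes "failures k \<omega> = x"
  shows failures_failure_time: "failures (failure_time x \<omega>) \<omega> = x"
    and failure_time_ge: "x \<le> failure_time x \<omega>"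
    and stopped_time_le_failure_time: "stopped_time x n \<omega> \<le> failure_time x \<omega>"
    and stopped_time_eq_failure_time: "failure_time x \<omega> \<le> n \<Longrightarrow> stopped_time x n \<omega> = failure_time x \<omega>"
proof -
  show T: "failures (failure_time x \<omega>) \<omega> = x"
    unfolding failure_time_def by (rule LeastI[of _ k]) (rule assms)
  then show "x \<le> failure_time x \<omega>"
    using failures_le[of "failure_time x \<omega>" \<omega>] by simp
  show "stopped_time x n \<omega> \<le> failure_time x \<omega>"
    unfolding stopped_time_def by (rule Least_le) (simp add: T)
  show "stopped_time x n \<omega> = failure_time x \<omega>" if "failure_time x \<omega> \<le> n"
    unfolding stopped_time_def
  proof (rule Least_equality)
    fix k assume "k = n \<or> x \<le> failures k \<omega>"
    then show "failure_time x \<omega> \<le> k"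
      using that failures_attained[of x k \<omega>] unfolding failure_time_def
      by (auto intro: Least_le order_trans)
  qed (simp add: T)
qed

locale cookie_environment =
  fixes p :: "nat \<Rightarrow> real"
  assumes p_prob: "\<And>i. 0 \<le> p i \<and> p i \<le> 1"
begin

abbreviation M where "M \<equiv> cookie_space p"

sublocale prob_space M
  unfolding cookie_space_def by (intro prob_space_PiM) (simp add: prob_space_measure_pmf)

lemma space_cookie_space [simp]: "space M = UNIV"
  by (simp add: cookie_space_def space_PiM)

lemma coordinate_measurable_pmf: "(\<lambda>\<omega>. \<omega> i) \<in> measurable M (bernoulli_pmf (p i))"
  unfolding cookie_space_def by (rule measurable_component_singleton) simp

lemma coordinate_measurable [measurable]: "(\<lambda>\<omega>. \<omega> i) \<in> measurable M (count_space UNIV)"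
  using coordinate_measurable_pmf by (simp add: measurable_def)

lemma distr_coordinate: "distr M (bernoulli_pmf (p i)) (\<lambda>\<omega>. \<omega> i) = measure_pmf (bernoulli_pmf (p i))"
  unfolding cookie_space_def by (rule distr_PiM_component) (auto simp: prob_space_measure_pmf)

lemma indep_coordinates: "indep_vars (\<lambda>i. measure_pmf (bernoulli_pmf (p i))) (\<lambda>i \<omega>. \<omega> i) UNIV"
proof -
  have "distr M (\<Pi>\<^sub>M i\<in>UNIV. bernoulli_pmf (p i)) (\<lambda>\<omega>. \<lambda>i\<in>UNIV. \<omega> i)
     = (\<Pi>\<^sub>M i\<in>UNIV. distr M (bernoulli_pmf (p i)) (\<lambda>\<omega>. \<omega> i))"
    by (simp only: distr_coordinate) (simp add: restrict_UNIV cookie_space_def[symmetric])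
  then show ?thesis
    by (subst indep_vars_iff_distr_eq_PiM) (auto simp: coordinate_measurable_pmf)
qed

lemma integral_coordinate: "(\<integral>\<omega>. h (\<omega> i) \<partial>M) = h True * p i + h False * (1 - p i)"
proof -
  have "(\<integral>\<omega>. h (\<omega> i) \<partial>M) = (\<integral>b. h b \<partial>distr M (bernoulli_pmf (p i)) (\<lambda>\<omega>. \<omega> i))"
    by (subst integral_distr[OF coordinate_measurable_pmf]) auto
  then show ?thesis
    using p_prob[of i] by (simp add: distr_coordinate)
qed

lemma prob_UNIV [simp]: "prob UNIV = 1"
  using prob_space by simp

lemma integrable_bounded:
  fixes f :: "(nat \<Rightarrow> bool) \<Rightarrow> real"
  assumes [measurable]: "f \<in> borel_measurable M" and "\<And>\<omega>. \<bar>f \<omega>\<bar> \<le> B"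
  shows "integrable M f"
  using assms(2) by (intro integrable_const_bound[where B=B]) auto

lemma integrable_coordinate: "integrable M (\<lambda>\<omega>. h (\<omega> i) :: real)"
proof (rule integrable_bounded)
  show "\<bar>h (\<omega> i)\<bar> \<le> \<bar>h True\<bar> + \<bar>h False\<bar>" for \<omega>
    by (cases "\<omega> i") auto
qed measurable

lemma integral_mult_coordinate:
  fixes g :: "(nat \<Rightarrow> bool) \<Rightarrow> real" and h :: "bool \<Rightarrow> real"
  assumes [measurable]: "g \<in> borel_measurable M" and "integrable M g"
    and prefix: "\<And>\<omega> \<omega>'. (\<And>j. j < i \<Longrightarrow> \<omega> j = \<omega>' j) \<Longrightarrow> g \<omega> = g \<omega>'"
  shows "(\<integral>\<omega>. g \<omega> * h (\<omega> i) \<partial>M) = (\<integral>\<omega>. g \<omega> \<partial>M) * (h True * p i + h False * (1 - p i))"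
proof -
  define B where "B i = measure_pmf (bernoulli_pmf (p i))" for i
  define g' where "g' y = g (\<lambda>j. if j < i then y j else False)" for y :: "nat \<Rightarrow> bool"
  have "(\<lambda>y. \<lambda>j. if j < i then y j else False) \<in> measurable (PiM {..<i} B) M"
    unfolding cookie_space_def B_def[symmetric]
  proof (rule measurable_PiM_single')
    show "(\<lambda>y. if j < i then y j else False) \<in> measurable (PiM {..<i} B) (B j)" for j
      by (cases "j < i") (simp_all add: measurable_component_singleton, simp add: B_def)
  qed (auto simp: B_def space_PiM)
  then have g': "g' \<in> borel_measurable (PiM {..<i} B)"
    unfolding g'_def by (rule measurable_compose[OF _ assms(1)])
  have h: "(\<lambda>y. h (y i)) \<in> borel_measurable (PiM {i} B)"
    by (rule measurable_compose[OF measurable_component_singleton]) (auto simp: B_def)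
  have "indep_var (PiM {..<i} B) (\<lambda>\<omega>. restrict \<omega> {..<i}) (PiM {i} B) (\<lambda>\<omega>. restrict \<omega> {i})"
    by (rule indep_var_restrict[OF indep_coordinates[folded B_def]]) auto
  from indep_var_compose[OF this g' h]
  have indep: "indep_var borel (g' \<circ> (\<lambda>\<omega>. restrict \<omega> {..<i})) borel ((\<lambda>y. h (y i)) \<circ> (\<lambda>\<omega>. restrict \<omega> {i}))" .
  have g_eq: "g' \<circ> (\<lambda>\<omega>. restrict \<omega> {..<i}) = g"
    unfolding comp_def g'_def by (rule ext, rule prefix) simp
  have h_eq: "(\<lambda>y. h (y i)) \<circ> (\<lambda>\<omega>. restrict \<omega> {i}) = (\<lambda>\<omega>. h (\<omega> i))"
    by (simp add: comp_def)
  have "(\<integral>\<omega>. g \<omega> * h (\<omega> i) \<partial>M) = (\<integral>\<omega>. g \<omega> \<partial>M) * (\<integral>\<omega>. h (\<omega> i) \<partial>M)"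
    by (rule indep_var_lebesgue_integral[OF indep[unfolded g_eq h_eq] assms(2) integrable_coordinate])
  then show ?thesis
    by (simp add: integral_coordinate)
qed

lemma failures_measurable [measurable]: "failures k \<in> measurable M (count_space UNIV)"
proof -
  have "{\<omega>. failures k \<omega> = a} = {\<omega> \<in> space M. (\<Sum>i=1..k. of_bool (\<not> \<omega> i)) = (real a :: real)}" for a
    by (simp only: failures_eq_sum[symmetric] of_nat_eq_iff space_cookie_space) simp
  moreover have "{\<omega> \<in> space M. (\<Sum>i=1..k. of_bool (\<not> \<omega> i)) = (real a :: real)} \<in> sets M" for a
    by measurable
  ultimately show ?thesis
    by (simp add: measurable_count_space_eq2_countable vimage_def)
qed

lemma running_measurable [measurable]: "Measurable.pred M (running x i)"
  unfolding running_def[abs_def] by measurable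

lemma failure_time_measurable [measurable]: "failure_time x \<in> measurable M (count_space UNIV)"
  unfolding failure_time_def[abs_def] by measurable

lemma stopped_time_measurable [measurable]: "stopped_time x n \<in> measurable M (count_space UNIV)"
  unfolding stopped_time_def[abs_def] by measurable

lemma stopped_sum_measurable [measurable]: "stopped_sum x h n \<in> borel_measurable M"
  unfolding stopped_sum_def[abs_def] by measurable

lemma abs_stopped_sum_le: "\<bar>stopped_sum x h n \<omega>\<bar> \<le> (\<Sum>i=1..n. \<bar>h i True\<bar> + \<bar>h i False\<bar>)"
  unfolding stopped_sum_def
proof (rule order_trans[OF sum_abs sum_mono])
  show "\<bar>if running x i \<omega> then h i (\<omega> i) else 0\<bar> \<le> \<bar>h i True\<bar> + \<bar>h i False\<bar>" for i
    by (cases "\<omega> i") auto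
qed

lemma integrable_stopped_sum: "integrable M (stopped_sum x h n)"
  using abs_stopped_sum_le by (rule integrable_bounded[rotated]) measurable

lemma integrable_stopped_sum_square: "integrable M (\<lambda>\<omega>. (stopped_sum x h n \<omega>)\<^sup>2)"
proof (rule integrable_bounded)
  show "\<bar>(stopped_sum x h n \<omega>)\<^sup>2\<bar> \<le> (\<Sum>i=1..n. \<bar>h i True\<bar> + \<bar>h i False\<bar>)\<^sup>2" for \<omega>
    using power_mono[OF abs_stopped_sum_le abs_ge_zero, of x h n \<omega> 2] by (simp add: power2_abs)
qed measurable

lemma stopped_sum_Suc:
  "stopped_sum x h (Suc n) \<omega> = stopped_sum x h n \<omega> + of_bool (running x (Suc n) \<omega>) * h (Suc n) (\<omega> (Suc n))"
  by (simp add: stopped_sum_def)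

lemma stopped_sum_prefix:
  "(\<And>j. j < Suc n \<Longrightarrow> \<omega> j = \<omega>' j) \<Longrightarrow> stopped_sum x h n \<omega> = stopped_sum x h n \<omega>'"
  unfolding stopped_sum_def using running_prefix[of _ \<omega> \<omega>' x] by (intro sum.cong) auto

lemma integrable_running: "integrable M (\<lambda>\<omega>. of_bool (running x i \<omega>) :: real)"
  by (rule integrable_bounded[where B=1]) auto

lemma integrable_running_increment: "integrable M (\<lambda>\<omega>. of_bool (running x i \<omega>) * g (\<omega> i) :: real)"
proof (rule integrable_bounded)
  show "\<bar>of_bool (running x i \<omega>) * g (\<omega> i)\<bar> \<le> \<bar>g True\<bar> + \<bar>g False\<bar>" for \<omega>
    by (cases "\<omega> i") auto
qed measurable

lemma integrable_stopped_time: "integrable M (\<lambda>\<omega>. real (stopped_time x n \<omega>))"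
proof (rule integrable_bounded)
  show "\<bar>real (stopped_time x n \<omega>)\<bar> \<le> real n" for \<omega>
    using stopped_time_le[of x n \<omega>] by simp
qed measurable

lemma integrable_stopped_time_square: "integrable M (\<lambda>\<omega>. (real (stopped_time x n \<omega>))\<^sup>2)"
proof (rule integrable_bounded)
  show "\<bar>(real (stopped_time x n \<omega>))\<^sup>2\<bar> \<le> (real n)\<^sup>2" for \<omega>
    using stopped_time_le[of x n \<omega>] by (simp add: power_mono)
qed measurable

text \<open>Whether step i is running depends only on the coordinates before i, so stopped sums of centred
  increments are martingales.\<close>

context
  fixes h :: "nat \<Rightarrow> bool \<Rightarrow> real"
  assumes centred: "\<And>i. h i True * p i + h i False * (1 - p i) = 0"
begin

lemma integral_stopped_sum: "(\<integral>\<omega>. stopped_sum x h n \<omega> \<partial>M) = 0"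
proof (induction n)
  case (Suc n)
  have "of_bool (running x (Suc n) \<omega>) = (of_bool (running x (Suc n) \<omega>') :: real)"
    if "\<And>j. j < Suc n \<Longrightarrow> \<omega> j = \<omega>' j" for \<omega> \<omega>'
    using running_prefix[OF that] by simp
  from integral_mult_coordinate[where h="h (Suc n)", OF _ integrable_running this]
  have "(\<integral>\<omega>. of_bool (running x (Suc n) \<omega>) * h (Suc n) (\<omega> (Suc n)) \<partial>M) = 0"
    by (simp add: centred)
  then show ?case
    using Suc integrable_stopped_sum[of x h n] integrable_running_increment[of x "Suc n" "h (Suc n)"]
    by (simp add: stopped_sum_Suc[abs_def])
qed (simp add: stopped_sum_def)

lemma integral_stopped_sum_cross_term:
  "(\<integral>\<omega>. stopped_sum x h n \<omega> * of_bool (running x (Suc n) \<omega>) * h (Suc n) (\<omega> (Suc n)) \<partial>M) = 0"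
proof -
  have prefix: "stopped_sum x h n \<omega> * of_bool (running x (Suc n) \<omega>)
      = stopped_sum x h n \<omega>' * (of_bool (running x (Suc n) \<omega>') :: real)"
    if "\<And>j. j < Suc n \<Longrightarrow> \<omega> j = \<omega>' j" for \<omega> \<omega>'
    using running_prefix[OF that] stopped_sum_prefix[OF that] by simp
  have int: "integrable M (\<lambda>\<omega>. stopped_sum x h n \<omega> * of_bool (running x (Suc n) \<omega>))"
  proof (rule integrable_bounded)
    show "\<bar>stopped_sum x h n \<omega> * of_bool (running x (Suc n) \<omega>)\<bar> \<le> (\<Sum>i=1..n. \<bar>h i True\<bar> + \<bar>h i False\<bar>)"
      for \<omega>
      using abs_stopped_sum_le[of x h n \<omega>] order_trans[OF abs_ge_zero abs_stopped_sum_le]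
      by (cases "running x (Suc n) \<omega>") auto
  qed measurable
  have "(\<integral>\<omega>. stopped_sum x h n \<omega> * of_bool (running x (Suc n) \<omega>) * h (Suc n) (\<omega> (Suc n)) \<partial>M)
      = (\<integral>\<omega>. stopped_sum x h n \<omega> * of_bool (running x (Suc n) \<omega>) \<partial>M)
        * (h (Suc n) True * p (Suc n) + h (Suc n) False * (1 - p (Suc n)))"
    by (rule integral_mult_coordinate[OF _ int prefix]) measurable
  then show ?thesis
    by (simp add: centred)
qed

lemma integral_stopped_sum_square:
  "(\<integral>\<omega>. (stopped_sum x h n \<omega>)\<^sup>2 \<partial>M)
     = (\<integral>\<omega>. stopped_sum x (\<lambda>i _. (h i True)\<^sup>2 * p i + (h i False)\<^sup>2 * (1 - p i)) n \<omega> \<partial>M)"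
proof (induction n)
  case (Suc n)
  define r where "r \<omega> = (of_bool (running x (Suc n) \<omega>) :: real)" for \<omega>
  define v where "v = (h (Suc n) True)\<^sup>2 * p (Suc n) + (h (Suc n) False)\<^sup>2 * (1 - p (Suc n))"
  define cross where "cross \<omega> = stopped_sum x h n \<omega> * r \<omega> * h (Suc n) (\<omega> (Suc n))" for \<omega>
  have square: "(\<integral>\<omega>. r \<omega> * (h (Suc n) (\<omega> (Suc n)))\<^sup>2 \<partial>M) = (\<integral>\<omega>. r \<omega> \<partial>M) * v"
  proof -
    have prefix: "r \<omega> = r \<omega>'" if "\<And>j. j < Suc n \<Longrightarrow> \<omega> j = \<omega>' j" for \<omega> \<omega>'
      using running_prefix[OF that] by (simp add: r_def)
    have "integrable M r"
      unfolding r_def by (rule integrable_running)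
    from integral_mult_coordinate[where h="\<lambda>b. (h (Suc n) b)\<^sup>2", OF _ this prefix]
    show ?thesis
      by (simp add: r_def v_def)
  qed
  have expand: "(stopped_sum x h (Suc n) \<omega>)\<^sup>2
      = (stopped_sum x h n \<omega>)\<^sup>2 + 2 * cross \<omega> + r \<omega> * (h (Suc n) (\<omega> (Suc n)))\<^sup>2" for \<omega>
    by (simp add: stopped_sum_Suc cross_def r_def power2_eq_square algebra_simps)
  have r_int: "integrable M (\<lambda>\<omega>. r \<omega> * (h (Suc n) (\<omega> (Suc n)))\<^sup>2)"
    unfolding r_def by (rule integrable_running_increment)
  have "cross
      = (\<lambda>\<omega>. ((stopped_sum x h (Suc n) \<omega>)\<^sup>2 - (stopped_sum x h n \<omega>)\<^sup>2 - r \<omega> * (h (Suc n) (\<omega> (Suc n)))\<^sup>2) / 2)"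
    by (rule ext) (simp add: expand)
  then have "integrable M cross"
    using integrable_stopped_sum_square r_int by auto
  then have "(\<integral>\<omega>. (stopped_sum x h (Suc n) \<omega>)\<^sup>2 \<partial>M) = (\<integral>\<omega>. (stopped_sum x h n \<omega>)\<^sup>2 \<partial>M)
      + 2 * (\<integral>\<omega>. cross \<omega> \<partial>M) + (\<integral>\<omega>. r \<omega> * (h (Suc n) (\<omega> (Suc n)))\<^sup>2 \<partial>M)"
    using integrable_stopped_sum_square r_int by (simp add: expand)
  also have "\<dots> = (\<integral>\<omega>. stopped_sum x (\<lambda>i _. (h i True)\<^sup>2 * p i + (h i False)\<^sup>2 * (1 - p i)) n \<omega> \<partial>M)
      + (\<integral>\<omega>. r \<omega> * v \<partial>M)"
    using Suc square integral_stopped_sum_cross_term[of x n] by (simp add: cross_def r_def)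
  also have "\<dots> = (\<integral>\<omega>. stopped_sum x (\<lambda>i _. (h i True)\<^sup>2 * p i + (h i False)\<^sup>2 * (1 - p i)) (Suc n) \<omega> \<partial>M)"
    using integrable_stopped_sum integrable_running
    by (simp add: stopped_sum_Suc[abs_def] r_def v_def)
  finally show ?case .
qed (simp add: stopped_sum_def)

end

end

locale balanced_cookie = cookie_environment +
  fixes A K :: real
  assumes A_nonneg: "0 \<le> A"
    and pbar_rate: "\<And>n. n \<ge> 1 \<Longrightarrow> \<bar>pbar p n - 1/2\<bar> \<le> K / real n"
    and Avg_rate: "\<And>n. n \<ge> 1 \<Longrightarrow> \<bar>Avg p n - A\<bar> \<le> K / real n"
begin

definition mean_defect :: "nat \<Rightarrow> real" where
  "mean_defect c = (\<Sum>i=1..c. 1/2 - p i)"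

definition variance_defect :: "nat \<Rightarrow> real" where
  "variance_defect c = (\<Sum>i=1..c. p i * (1 - p i) - A)"

lemma abs_mean_defect_le: "\<bar>mean_defect c\<bar> \<le> K"
proof -
  have "\<bar>\<Sum>i=1..c. (p i - 1/2)\<bar> \<le> K"
    using pbar_rate by (intro abs_sum_centred_le) (simp add: pbar_def)
  moreover have "mean_defect c = - (\<Sum>i=1..c. (p i - 1/2))"
    by (simp add: mean_defect_def flip: sum_negf)
  ultimately show ?thesis
    by simp
qed

lemma abs_variance_defect_le: "\<bar>variance_defect c\<bar> \<le> K"
  unfolding variance_defect_def using Avg_rate by (intro abs_sum_centred_le) (simp add: Avg_def)

abbreviation failure_martingale :: "nat \<Rightarrow> nat \<Rightarrow> (nat \<Rightarrow> bool) \<Rightarrow> real" where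
  "failure_martingale x \<equiv> stopped_sum x (\<lambda>i b. of_bool (\<not> b) - (1 - p i))"

abbreviation quadratic_variation :: "nat \<Rightarrow> nat \<Rightarrow> (nat \<Rightarrow> bool) \<Rightarrow> real" where
  "quadratic_variation x \<equiv> stopped_sum x (\<lambda>i _. p i * (1 - p i))"

lemma failure_martingale_eq:
  "failure_martingale x n \<omega>
     = real (min (failures n \<omega>) x) - real (stopped_time x n \<omega>) / 2 - mean_defect (stopped_time x n \<omega>)"
proof -
  have "failure_martingale x n \<omega>
      = real (failures (stopped_time x n \<omega>) \<omega>) - (\<Sum>i=1..stopped_time x n \<omega>. 1 - p i)"
    by (simp add: stopped_sum_eq_sum sum_subtractf failures_eq_sum)
  also have "(\<Sum>i=1..stopped_time x n \<omega>. 1 - p i) = real (stopped_time x n \<omega>) / 2 + mean_defect (stopped_time x n \<omega>)"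
    by (simp add: mean_defect_def sum_subtractf)
  finally show ?thesis
    by (simp add: failures_stopped_time)
qed

lemma quadratic_variation_eq:
  "quadratic_variation x n \<omega> = A * real (stopped_time x n \<omega>) + variance_defect (stopped_time x n \<omega>)"
  by (simp add: stopped_sum_eq_sum variance_defect_def sum_subtractf)

lemma integral_failure_martingale: "(\<integral>\<omega>. failure_martingale x n \<omega> \<partial>M) = 0"
  by (rule integral_stopped_sum) (simp add: algebra_simps)

lemma integral_failure_martingale_square:
  "(\<integral>\<omega>. (failure_martingale x n \<omega>)\<^sup>2 \<partial>M) = (\<integral>\<omega>. quadratic_variation x n \<omega> \<partial>M)"
proof -
  have "(\<lambda>i (_::bool). (of_bool (\<not> True) - (1 - p i))\<^sup>2 * p i + (of_bool (\<not> False) - (1 - p i))\<^sup>2 * (1 - p i))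
      = (\<lambda>i _. p i * (1 - p i))"
    by (simp add: fun_eq_iff power2_eq_square algebra_simps)
  then show ?thesis
    using integral_stopped_sum_square[of "\<lambda>i b. of_bool (\<not> b) - (1 - p i)" x n]
    by (simp add: algebra_simps)
qed

lemma stopped_time_le_failure_martingale:
  "real (stopped_time x n \<omega>) \<le> 2 * real x - 2 * failure_martingale x n \<omega> + 2 * K"
proof -
  have "real (min (failures n \<omega>) x) \<le> real x"
    by simp
  then show ?thesis
    using failure_martingale_eq[of x n \<omega>] abs_mean_defect_le[of "stopped_time x n \<omega>"] by linarith
qed

lemma integral_stopped_time_le: "(\<integral>\<omega>. real (stopped_time x n \<omega>) \<partial>M) \<le> 2 * real x + 2 * K"
proof -
  have "(\<integral>\<omega>. real (stopped_time x n \<omega>) \<partial>M) \<le> (\<integral>\<omega>. 2 * real x - 2 * failure_martingale x n \<omega> + 2 * K \<partial>M)"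
    using integrable_stopped_sum
    by (intro integral_mono integrable_stopped_time stopped_time_le_failure_martingale) auto
  also have "\<dots> = 2 * real x + 2 * K"
    using integrable_stopped_sum integral_failure_martingale by (simp add: prob_space)
  finally show ?thesis .
qed

lemma AE_failures_reach: "AE \<omega> in M. \<exists>k. failures k \<omega> = x"
proof -
  define N where "N = {\<omega> \<in> space M. \<nexists>k. failures k \<omega> = x}"
  have N: "N \<in> sets M"
    unfolding N_def by measurable
  have "prob N \<le> (2 * real x + 2 * K) / real n" if "n \<ge> 1" for n
  proof -
    have "real n * prob N = (\<integral>\<omega>. real n * indicator N \<omega> \<partial>M)"
      using Bochner_Integration.integral_indicator[of M N] by simp
    also have "\<dots> \<le> (\<integral>\<omega>. real (stopped_time x n \<omega>) \<partial>M)"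
    proof (rule integral_mono)
      show "integrable M (\<lambda>\<omega>. real n * indicator N \<omega>)"
        using N by (intro integrable_mult_right integrable_real_indicator) (auto simp: emeasure_eq_measure)
      show "real n * indicator N \<omega> \<le> real (stopped_time x n \<omega>)" for \<omega>
        by (auto simp: N_def indicator_def stopped_time_unreached)
    qed (rule integrable_stopped_time)
    also have "\<dots> \<le> 2 * real x + 2 * K"
      by (rule integral_stopped_time_le)
    finally show ?thesis
      using that by (simp add: field_simps)
  qed
  then have "prob N \<le> 0"
    by (intro LIMSEQ_le_const[OF lim_const_over_n]) auto
  then show ?thesis
    by (subst AE_iff_measurable[OF N]) (auto simp: N_def emeasure_eq_measure measure_le_0_iff)
qed

lemma quadratic_variation_le: "quadratic_variation x n \<omega> \<le> A * real (stopped_time x n \<omega>) + K"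
  using abs_variance_defect_le[of "stopped_time x n \<omega>"] by (simp add: quadratic_variation_eq abs_le_iff)

lemma integral_stopped_time_square_le:
  "(\<integral>\<omega>. (real (stopped_time x n \<omega>))\<^sup>2 \<partial>M) \<le> 2 * (2 * real x + 2 * K)\<^sup>2 + 8 * (A * (2 * real x + 2 * K) + K)"
proof -
  have pointwise: "(real (stopped_time x n \<omega>))\<^sup>2 \<le> 2 * (2 * real x + 2 * K)\<^sup>2 + 8 * (failure_martingale x n \<omega>)\<^sup>2" for \<omega>
  proof -
    have "real (stopped_time x n \<omega>) \<le> (2 * real x + 2 * K) + 2 * \<bar>failure_martingale x n \<omega>\<bar>"
      using stopped_time_le_failure_martingale[of x n \<omega>] by linarith
    then have "(real (stopped_time x n \<omega>))\<^sup>2 \<le> ((2 * real x + 2 * K) + 2 * \<bar>failure_martingale x n \<omega>\<bar>)\<^sup>2"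
      by (rule power_mono) simp
    also have "\<dots> \<le> 2 * (2 * real x + 2 * K)\<^sup>2 + 8 * (failure_martingale x n \<omega>)\<^sup>2"
      using square_sum_le[of "2 * real x + 2 * K" "2 * \<bar>failure_martingale x n \<omega>\<bar>"]
      by (simp add: power_mult_distrib)
    finally show ?thesis .
  qed
  have "(\<integral>\<omega>. (failure_martingale x n \<omega>)\<^sup>2 \<partial>M) \<le> (\<integral>\<omega>. A * real (stopped_time x n \<omega>) + K \<partial>M)"
    unfolding integral_failure_martingale_square using integrable_stopped_time integrable_stopped_sum
    by (intro integral_mono quadratic_variation_le) auto
  also have "\<dots> \<le> A * (2 * real x + 2 * K) + K"
    using integrable_stopped_time integral_stopped_time_le A_nonneg
    by (simp add: prob_space mult_left_mono)
  finally have "(\<integral>\<omega>. (failure_martingale x n \<omega>)\<^sup>2 \<partial>M) \<le> A * (2 * real x + 2 * K) + K" .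
  moreover have "(\<integral>\<omega>. (real (stopped_time x n \<omega>))\<^sup>2 \<partial>M)
      \<le> (\<integral>\<omega>. 2 * (2 * real x + 2 * K)\<^sup>2 + 8 * (failure_martingale x n \<omega>)\<^sup>2 \<partial>M)"
    using integrable_stopped_sum_square
    by (intro integral_mono integrable_stopped_time_square pointwise) auto
  ultimately show ?thesis
    using integrable_stopped_sum_square by (simp add: prob_space)
qed

lemma stopped_time_eventually:
  "AE \<omega> in M. eventually (\<lambda>n. stopped_time x n \<omega> = failure_time x \<omega>) sequentially"
  using AE_failures_reach
  by eventually_elim (auto simp: eventually_sequentially intro: stopped_time_eq_failure_time)

lemma integrable_failure_time_square: "integrable M (\<lambda>\<omega>. (real (failure_time x \<omega>))\<^sup>2)"
proof (rule integral_monotone_convergence_nonneg)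
  show "AE \<omega> in M. mono (\<lambda>n. (real (stopped_time x n \<omega>))\<^sup>2)"
    by (intro AE_I2) (auto simp: mono_def intro!: power_mono stopped_time_mono)
  show "AE \<omega> in M. (\<lambda>n. (real (stopped_time x n \<omega>))\<^sup>2) \<longlonglongrightarrow> (real (failure_time x \<omega>))\<^sup>2"
    using stopped_time_eventually
    by eventually_elim (auto elim: tendsto_eventually[OF eventually_mono])
  show "(\<lambda>n. \<integral>\<omega>. (real (stopped_time x n \<omega>))\<^sup>2 \<partial>M)
      \<longlonglongrightarrow> (SUP n. \<integral>\<omega>. (real (stopped_time x n \<omega>))\<^sup>2 \<partial>M)"
  proof (rule LIMSEQ_incseq_SUP)
    show "bdd_above (range (\<lambda>n. \<integral>\<omega>. (real (stopped_time x n \<omega>))\<^sup>2 \<partial>M))"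
      using integral_stopped_time_square_le by (intro bdd_aboveI) auto
    show "incseq (\<lambda>n. \<integral>\<omega>. (real (stopped_time x n \<omega>))\<^sup>2 \<partial>M)"
      by (auto simp: incseq_def intro!: integral_mono integrable_stopped_time_square power_mono stopped_time_mono)
  qed
qed (auto intro: integrable_stopped_time_square)

lemma integrable_failure_time: "integrable M (\<lambda>\<omega>. real (failure_time x \<omega>))"
  by (rule square_integrable_imp_integrable[OF _ integrable_failure_time_square]) measurable

lemma failure_martingale_eventually:
  "AE \<omega> in M. eventually (\<lambda>n. failure_martingale x n \<omega>
      = real x - real (failure_time x \<omega>) / 2 - mean_defect (failure_time x \<omega>)) sequentially"
  using AE_failures_reach[of x]
proof eventually_elim
  case (elim \<omega>)
  then obtain k where k: "failures k \<omega> = x" ..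
  have "failure_martingale x n \<omega> = real x - real (failure_time x \<omega>) / 2 - mean_defect (failure_time x \<omega>)"
    if "failure_time x \<omega> \<le> n" for n
  proof -
    have "x \<le> failures n \<omega>"
      using failures_mono[OF that, of \<omega>] failures_failure_time[OF k] by simp
    then show ?thesis
      using failure_martingale_eq[of x n \<omega>] stopped_time_eq_failure_time[OF k that] by simp
  qed
  then show ?case
    unfolding eventually_sequentially by blast
qed

lemma abs_failure_martingale_le:
  assumes "\<exists>k. failures k \<omega> = x"
  shows "\<bar>failure_martingale x n \<omega>\<bar> \<le> real x + real (failure_time x \<omega>) / 2 + K"
proof -
  have "real (min (failures n \<omega>) x) \<le> real x" "real (stopped_time x n \<omega>) \<le> real (failure_time x \<omega>)"
    using assms stopped_time_le_failure_time by auto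
  then show ?thesis
    using failure_martingale_eq[of x n \<omega>] abs_mean_defect_le[of "stopped_time x n \<omega>"]
    by (simp add: abs_le_iff) linarith
qed

lemma abs_quadratic_variation_le:
  assumes "\<exists>k. failures k \<omega> = x"
  shows "\<bar>quadratic_variation x n \<omega>\<bar> \<le> A * real (failure_time x \<omega>) + K"
proof -
  have "0 \<le> quadratic_variation x n \<omega>"
    unfolding stopped_sum_def using p_prob by (intro sum_nonneg) auto
  moreover have "A * real (stopped_time x n \<omega>) \<le> A * real (failure_time x \<omega>)"
    using assms A_nonneg stopped_time_le_failure_time by (auto intro: mult_left_mono)
  ultimately show ?thesis
    using quadratic_variation_le[of x n \<omega>] by simp
qed

lemma integrable_shifted_failure_time_square:
  "integrable M (\<lambda>\<omega>. (a + real (failure_time x \<omega>) / 2)\<^sup>2)"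
proof -
  have "(\<lambda>\<omega>. (a + real (failure_time x \<omega>) / 2)\<^sup>2)
      = (\<lambda>\<omega>. a\<^sup>2 + a * real (failure_time x \<omega>) + (real (failure_time x \<omega>))\<^sup>2 / 4)"
    by (auto simp: power2_eq_square algebra_simps)
  then show ?thesis
    using integrable_failure_time integrable_failure_time_square by auto
qed

lemma integral_failure_martingale_at_failure_time:
  "(\<integral>\<omega>. real x - real (failure_time x \<omega>) / 2 - mean_defect (failure_time x \<omega>) \<partial>M) = 0"
proof -
  have "AE \<omega> in M. \<bar>failure_martingale x n \<omega>\<bar> \<le> real x + real (failure_time x \<omega>) / 2 + K" for n
    using AE_failures_reach[of x] by eventually_elim (rule abs_failure_martingale_le)
  moreover have "integrable M (\<lambda>\<omega>. real x + real (failure_time x \<omega>) / 2 + K)"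
    using integrable_failure_time by auto
  ultimately have "(\<lambda>n. \<integral>\<omega>. failure_martingale x n \<omega> \<partial>M)
      \<longlonglongrightarrow> (\<integral>\<omega>. real x - real (failure_time x \<omega>) / 2 - mean_defect (failure_time x \<omega>) \<partial>M)"
    using failure_martingale_eventually by (intro integral_tendsto_eventually_eq) auto
  then show ?thesis
    by (simp add: integral_failure_martingale LIMSEQ_const_iff)
qed

lemma integral_failure_martingale_square_at_failure_time:
  "(\<integral>\<omega>. (real x - real (failure_time x \<omega>) / 2 - mean_defect (failure_time x \<omega>))\<^sup>2 \<partial>M)
    = (\<integral>\<omega>. A * real (failure_time x \<omega>) + variance_defect (failure_time x \<omega>) \<partial>M)"
proof -
  have dominated: "AE \<omega> in M. \<bar>(failure_martingale x n \<omega>)\<^sup>2\<bar> \<le> (real x + K + real (failure_time x \<omega>) / 2)\<^sup>2" for n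
    using AE_failures_reach[of x]
  proof eventually_elim
    case (elim \<omega>)
    from power_mono[OF abs_failure_martingale_le[OF elim] abs_ge_zero, of n 2] show ?case
      by (simp add: power2_abs add_ac)
  qed
  have "AE \<omega> in M. eventually (\<lambda>n. (failure_martingale x n \<omega>)\<^sup>2
      = (real x - real (failure_time x \<omega>) / 2 - mean_defect (failure_time x \<omega>))\<^sup>2) sequentially"
    using failure_martingale_eventually[of x] by eventually_elim (auto elim: eventually_mono)
  from integral_tendsto_eventually_eq[OF _ _ integrable_shifted_failure_time_square this dominated]
  have "(\<lambda>n. \<integral>\<omega>. (failure_martingale x n \<omega>)\<^sup>2 \<partial>M)
      \<longlonglongrightarrow> (\<integral>\<omega>. (real x - real (failure_time x \<omega>) / 2 - mean_defect (failure_time x \<omega>))\<^sup>2 \<partial>M)"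
    by measurable
  moreover have "(\<lambda>n. \<integral>\<omega>. quadratic_variation x n \<omega> \<partial>M)
      \<longlonglongrightarrow> (\<integral>\<omega>. A * real (failure_time x \<omega>) + variance_defect (failure_time x \<omega>) \<partial>M)"
  proof (rule integral_tendsto_eventually_eq)
    show "integrable M (\<lambda>\<omega>. A * real (failure_time x \<omega>) + K)"
      using integrable_failure_time by auto
    show "AE \<omega> in M. eventually (\<lambda>n. quadratic_variation x n \<omega>
        = A * real (failure_time x \<omega>) + variance_defect (failure_time x \<omega>)) sequentially"
      using stopped_time_eventually[of x] by eventually_elim (auto simp: quadratic_variation_eq elim: eventually_mono)
    show "AE \<omega> in M. \<bar>quadratic_variation x n \<omega>\<bar> \<le> A * real (failure_time x \<omega>) + K" for n
      using AE_failures_reach[of x] by eventually_elim (rule abs_quadratic_variation_le)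
  qed measurable
  ultimately show ?thesis
    by (simp add: integral_failure_martingale_square LIMSEQ_unique)
qed

lemma integral_U_deviation_square:
  "(\<integral>\<omega>. (real (U x \<omega>) - real x)\<^sup>2 \<partial>M) = 4 * (\<integral>\<omega>. (real (failure_time x \<omega>) / 2 - real x)\<^sup>2 \<partial>M)"
proof -
  have "AE \<omega> in M. (real (U x \<omega>) - real x)\<^sup>2 = 4 * (real (failure_time x \<omega>) / 2 - real x)\<^sup>2"
    using AE_failures_reach[of x]
  proof eventually_elim
    case (elim \<omega>)
    then have "x \<le> failure_time x \<omega>"
      using failure_time_ge by blast
    then show ?case
      by (simp add: U_eq_failure_time of_nat_diff power2_eq_square algebra_simps)
  qed
  then have "(\<integral>\<omega>. (real (U x \<omega>) - real x)\<^sup>2 \<partial>M) = (\<integral>\<omega>. 4 * (real (failure_time x \<omega>) / 2 - real x)\<^sup>2 \<partial>M)"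
    by (intro integral_cong_AE) (simp_all add: U_eq_failure_time)
  then show ?thesis
    by simp
qed

lemma U_second_moment_bound:
  assumes "1 \<le> x"
  shows "\<bar>(1 / real x) * (\<integral>\<omega>. (real (U x \<omega>) - real x)\<^sup>2 \<partial>M) - 8 * A\<bar>
    \<le> 4 * (4 * A * K + 2 * K + 2 * A + 2 * K\<^sup>2) / sqrt (real x)"
proof -
  define C where "C = 4 * A * K + 2 * K + 2 * A + 2 * K\<^sup>2"
  define I where "I = (\<integral>\<omega>. (real (failure_time x \<omega>) / 2 - real x)\<^sup>2 \<partial>M)"
  have bound: "\<bar>I - 2 * A * real x\<bar> \<le> C * sqrt (real x)"
    unfolding I_def C_def using assms
    by (intro second_moment_from_wald[where e="\<lambda>\<omega>. mean_defect (failure_time x \<omega>)"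
          and g="\<lambda>\<omega>. variance_defect (failure_time x \<omega>)"]
        integrable_failure_time_square abs_mean_defect_le abs_variance_defect_le A_nonneg
        integral_failure_martingale_at_failure_time integral_failure_martingale_square_at_failure_time) auto
  have "\<bar>(1 / real x) * (\<integral>\<omega>. (real (U x \<omega>) - real x)\<^sup>2 \<partial>M) - 8 * A\<bar>
      = \<bar>4 * (I - 2 * A * real x) / real x\<bar>"
    unfolding integral_U_deviation_square I_def[symmetric] using assms by (simp add: field_simps)
  also have "\<dots> = 4 * \<bar>I - 2 * A * real x\<bar> / real x"
    by (simp only: abs_divide abs_mult abs_numeral abs_of_nat)
  also have "\<dots> \<le> 4 * (C * sqrt (real x)) / real x"
    using bound by (simp add: divide_right_mono)
  also have "\<dots> = 4 * C / sqrt (real x)"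
    using assms by (simp add: field_simps flip: real_sqrt_mult_self[of "real x"])
  finally show ?thesis
    by (simp add: C_def)
qed

end

theorem lemma2p2:
  fixes p :: "nat \<Rightarrow> real" and A :: real
  assumes p01: "\<And>i. 0 \<le> p i \<and> p i \<le> 1"
    and pbar_lim: "pbar p \<longlonglongrightarrow> 1/2"
    and A_lim: "Avg p \<longlonglongrightarrow> A"
    and A_pos: "A > 0"
    and rate: "\<exists>K. \<forall>n\<ge>1. \<bar>pbar p n - 1/2\<bar> \<le> K / real n \<and> \<bar>Avg p n - A\<bar> \<le> K / real n"
  shows "((\<lambda>x. (1 / real x) * (\<integral>\<omega>. (real (U x \<omega>) - real x)^2 \<partial>cookie_space p))
           \<longlonglongrightarrow> 8 * A)
    \<and> (\<exists>C. \<exists>x0\<ge>1. \<forall>x\<ge>x0.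
           \<bar>(1 / real x) * (\<integral>\<omega>. (real (U x \<omega>) - real x)^2 \<partial>cookie_space p) - 8 * A\<bar>
             \<le> C * ln (real x) ^ 4 / sqrt (real x))"
proof -
  obtain K where K: "\<forall>n\<ge>1. \<bar>pbar p n - 1/2\<bar> \<le> K / real n \<and> \<bar>Avg p n - A\<bar> \<le> K / real n"
    using rate by blast
  interpret balanced_cookie p A K
    using p01 A_pos K by unfold_locales auto
  show ?thesis
    by (rule tendsto_and_log_rate_of_sqrt_rate) (rule U_second_moment_bound)
qed

end
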